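(* Let $N=2M$ and $\mathbf J=\begin{pmatrix}\mathbf 0&\mathbf I\\-\mathbf I&\mathbf 0\end{pmatrix}\in\mathbb{R}^{N\times N}$. Consider the canonical Hamiltonian system $\dot{\mathbf x}=\mathbf J\nabla H(\mathbf x)$ with $H(\mathbf x)=\tfrac12\mathbf x^\intercal\mathbf A\mathbf x+f(\mathbf x)$, where $\mathbf A\in\mathbb{R}^{N\times N}$ is symmetric and $f:\mathbb{R}^N\to\mathbb{R}$ is differentiable. Let $\mathbf X\in\mathbb{R}^{N\times n_s}$ collect snapshots $\mathbf x(t_i)=(\mathbf q(t_i),\mathbf p(t_i))$ of a solution at times $t_i$ with time step $\Delta t$, let $\mathbf X_t$ collect approximations $\mathbf x_t(t_i)$ of $\dot{\mathbf x}(t_i)$, and let $\nabla f(\mathbf X)$ collect the values $\nabla f(\mathbf x(t_i))$. Let $\mathbf U=\operatorname{diag}(\bar{\mathbf U},\bar{\mathbf U})\in\mathbb{R}^{N\times n}$, $n=2m$, be a cotangent lift POD basis, set $\hat{\mathbf J}=\mathbf U^\intercal\mathbf J\mathbf U$, $\hat{\mathbf X}=\mathbf U^\intercal\mathbf X$, $\hat{\mathbf X}_t=\mathbf U^\intercal\mathbf X_t$, $\hat\nabla f(\mathbf X)=\mathbf U^\intercal\nabla f(\mathbf X)$, and let $\hat{\mathbf A}\in\mathbb{R}^{n\times n}$ be the solution of \[\big(\mathbf I\otimes\hat{\mathbf X}\hat{\mathbf X}^\intercal+\hat{\mathbf X}\hat{\mathbf X}^\intercal\otimes\mathbf I\big)\operatorname{vec}\hat{\mathbf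 A}=\operatorname{vec}\big(\hat{\mathbf J}^\intercal\hat{\mathbf X}_t\hat{\mathbf X}^\intercal+\hat{\mathbf X}\hat{\mathbf X}_t^\intercal\hat{\mathbf J}-\hat\nabla f(\mathbf X)\hat{\mathbf X}^\intercal-\hat{\mathbf X}\hat\nabla f(\mathbf X)^\intercal\big).\] Assume: (i) for every $\mathbf x\in\mathbb{R}^N$, $\lim_{n\to N}\|(\mathbf I-\mathbf U\mathbf U^\intercal)\mathbf x\|=0$; (ii) $\lim_{\Delta t\to0}\max_i\|\mathbf x_t(t_i)-\dot{\mathbf x}(t_i)\|=0$; (iii) $\mathbf X$ and $\nabla H(\mathbf X)$ have maximal rank. Then $\hat{\mathbf A}$ converges to the intrusive operator $\bar{\mathbf A}=\mathbf U^\intercal\mathbf A\mathbf U$ as $\Delta t\to0$ and $n\to N$.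
   Context: Cotangent lift basis: writing $\mathbf X=\begin{pmatrix}\mathbf X_q\\\mathbf X_p\end{pmatrix}$ with $\mathbf X_q,\mathbf X_p\in\mathbb{R}^{M\times n_s}$, $\bar{\mathbf U}\in\mathbb{R}^{M\times m}$ consists of the first $m$ left singular vectors of the concatenated matrix $(\mathbf X_q\ \mathbf X_p)\in\mathbb{R}^{M\times 2n_s}$; then $\mathbf U^\intercal\mathbf U=\mathbf I$ and $\hat{\mathbf J}$ is the canonical symplectic matrix of dimension $n$, so $\hat{\mathbf J}^\intercal\hat{\mathbf J}=\mathbf I$. $\otimes$ is the Kronecker product and $\operatorname{vec}$ stacks columns. The linear system above characterizes the minimizer of $\|\hat{\mathbf X}_t-\hat{\mathbf J}(\mathbf M\hat{\mathbf X}+\hat\nabla f(\mathbf X))\|^2$ over symmetric $\mathbf M\in\mathbb{R}^{n\times n}$. *)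

theory Defs
  imports "HOL-Analysis.Analysis"
begin

text \<open>Phase space R^N with N = 2M is indexed by the finite type 'm + 'm:
  Inl a are the q-coordinates, Inr a the p-coordinates.\<close>

definition Jmat :: "real^('m::finite + 'm)^('m + 'm)" where
  "Jmat = (\<chi> i j. case (i, j) of
       (Inl a, Inr b) \<Rightarrow> (if a = b then 1 else 0)
     | (Inr a, Inl b) \<Rightarrow> (if a = b then -1 else 0)
     | _ \<Rightarrow> 0)"

definition blockdiag :: "real^'k^'m \<Rightarrow> real^('k + 'k)^('m + 'm)" where
  "blockdiag Ub = (\<chi> i j. case (i, j) of
       (Inl a, Inl b) \<Rightarrow> Ub $ a $ b
     | (Inr a, Inr b) \<Rightarrow> Ub $ a $ b
     | _ \<Rightarrow> 0)"

definition qpart :: "real^('m + 'm) \<Rightarrow> real^'m" where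
  "qpart x = (\<chi> a. x $ Inl a)"

definition ppart :: "real^('m + 'm) \<Rightarrow> real^'m" where
  "ppart x = (\<chi> a. x $ Inr a)"

definition outer :: "real^'r \<Rightarrow> real^'c \<Rightarrow> real^'c^'r" where
  "outer u v = (\<chi> a b. u $ a * v $ b)"

text \<open>vec stacks the columns: entry (j,i) is X_{ij} (column j, row i),
  pairs ordered lexicographically by the first (column) component.\<close>
definition vecm :: "real^'c^'r \<Rightarrow> real^('c \<times> 'r)" where
  "vecm X = (\<chi> p. X $ snd p $ fst p)"

text \<open>Kronecker product, consistent with vecm: (P \<otimes> Q)_{(a,b),(c,d)} = P_{ac} Q_{bd}\<close>
definition kron :: "real^'c1^'r1 \<Rightarrow> real^'c2^'r2 \<Rightarrow> real^('c1 \<times> 'c2)^('r1 \<times> 'r2)" where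
  "kron P Q = (\<chi> r s. P $ fst r $ fst s * Q $ snd r $ snd s)"

definition tgrid :: "real \<Rightarrow> real \<Rightarrow> nat \<Rightarrow> real" where
  "tgrid t0 dt i = t0 + real i * dt"

definition snap_idx :: "real \<Rightarrow> real \<Rightarrow> nat set" where
  "snap_idx T dt = {..nat \<lfloor>T / dt\<rfloor>}"

text \<open>Cotangent lift POD basis with m = M: Ub consists of (all M) left singular
  vectors of Y = (X_q X_p), i.e. an orthonormal eigenbasis of Y Y^T, where
  S = Y Y^T is passed as argument.\<close>
definition cotangent_lift_full :: "real^'m^'m \<Rightarrow> real^'m^'m \<Rightarrow> bool" where
  "cotangent_lift_full Ub S \<longleftrightarrow> orthogonal_matrix Ub \<and>
     (\<forall>j. \<exists>c. S *v column j Ub = c *\<^sub>R column j Ub)"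

text \<open>Y Y^T for Y = (X_q X_p), snapshots x_i, i \<in> I\<close>
definition snapYYt :: "(nat \<Rightarrow> real^('m + 'm)) \<Rightarrow> nat set \<Rightarrow> real^'m^'m" where
  "snapYYt X I = (\<Sum>i\<in>I. outer (qpart (X i)) (qpart (X i)) + outer (ppart (X i)) (ppart (X i)))"

definition opinf_gram :: "real^'n^'N \<Rightarrow> (nat \<Rightarrow> real^'N) \<Rightarrow> nat set \<Rightarrow> real^'n^'n" where
  "opinf_gram U X I = (\<Sum>i\<in>I. outer (transpose U *v X i) (transpose U *v X i))"

definition opinf_rhs :: "real^'n^'N \<Rightarrow> real^'N^'N \<Rightarrow> (nat \<Rightarrow> real^'N) \<Rightarrow> (nat \<Rightarrow> real^'N)
    \<Rightarrow> (nat \<Rightarrow> real^'N) \<Rightarrow> nat set \<Rightarrow> real^'n^'n" where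
  "opinf_rhs U J X Xt G I =
     (let Jh = transpose U ** J ** U;
          xh = (\<lambda>i. transpose U *v X i);
          xth = (\<lambda>i. transpose U *v Xt i);
          gh = (\<lambda>i. transpose U *v G i)
      in transpose Jh ** (\<Sum>i\<in>I. outer (xth i) (xh i))
         + (\<Sum>i\<in>I. outer (xh i) (xth i)) ** Jh
         - (\<Sum>i\<in>I. outer (gh i) (xh i))
         - (\<Sum>i\<in>I. outer (xh i) (gh i)))"

end

theory Submission
  imports Defs
begin

text \<open>With a complete basis \<open>U\<close> is orthogonal, and in reduced coordinates
  \<open>D = Ahat - Abar\<close> solves the Lyapunov equation \<open>G D + D G = \<Sum>\<^sub>i (e\<^sub>i h\<^sub>i\<^sup>T + h\<^sub>i e\<^sub>i\<^sup>T)\<close>,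
  where \<open>G = \<Sum>\<^sub>i h\<^sub>i h\<^sub>i\<^sup>T\<close> is the Gram matrix of the reduced snapshots \<open>h\<^sub>i\<close> and \<open>e\<^sub>i\<close> are the
  errors of the derivative approximations. Taking the inner product with \<open>D\<close> gives
  \<open>\<lambda>\<^sub>m\<^sub>i\<^sub>n(G) |D| \<le> \<Sum>\<^sub>i |e\<^sub>i| |h\<^sub>i|\<close>. Full rank of the snapshot matrix on one coarse grid,
  together with uniform continuity of the trajectory, shows that \<open>\<lambda>\<^sub>m\<^sub>i\<^sub>n(G)\<close> grows
  proportionally to the number of snapshots on every fine grid, so \<open>|D| \<le> C max\<^sub>i |e\<^sub>i| \<rightarrow> 0\<close>.\<close>

section \<open>Outer products, transposes and the Kronecker form\<close>

lemma transpose_outer: "transpose (outer a b) = outer b (a::real^_)"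
  by (simp add: vec_eq_iff outer_def transpose_def mult.commute)

lemma outer_mult_vector: "outer a b *v v = (b \<bullet> v) *\<^sub>R a"
  by (simp add: vec_eq_iff outer_def matrix_vector_mult_def inner_vec_def sum_distrib_left mult_ac)

lemma outer_matrix_mult: "outer a b ** (M::real^_^_) = outer a (transpose M *v b)"
  by (simp add: vec_eq_iff outer_def matrix_matrix_mult_def matrix_vector_mult_def transpose_def
      sum_distrib_left mult_ac)

lemma matrix_mult_outer: "(M::real^_^_) ** outer a b = outer (M *v a) b"
  by (simp add: vec_eq_iff outer_def matrix_matrix_mult_def matrix_vector_mult_def
      sum_distrib_left mult_ac)

lemma outer_add_left: "outer (a + a') b = outer a b + outer a' b"
  by (simp add: vec_eq_iff outer_def distrib_right)

lemma outer_add_right: "outer a (b + b') = outer a b + outer a b'"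
  by (simp add: vec_eq_iff outer_def distrib_left)

lemma outer_diff_left: "outer (a - a') b = outer a b - outer a' b"
  by (simp add: vec_eq_iff outer_def left_diff_distrib)

lemma outer_diff_right: "outer a (b - b') = outer a b - outer a b'"
  by (simp add: vec_eq_iff outer_def right_diff_distrib)

lemma inner_outer: "(D::real^'c^'r) \<bullet> outer a b = a \<bullet> (D *v b)"
  by (simp add: inner_vec_def outer_def matrix_vector_mult_def sum_distrib_left mult_ac)

lemma norm_outer: "norm (outer a b) = norm a * norm b"
proof -
  have "outer a b \<bullet> outer a b = (a \<bullet> a) * (b \<bullet> b)"
    by (simp add: inner_outer outer_mult_vector)
  then show ?thesis
    by (simp add: norm_eq_sqrt_inner real_sqrt_mult)
qed

lemma matrix_add_rdistrib: "((B::real^_^_) + C) ** A = B ** A + C ** A"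
  by (simp add: vec_eq_iff matrix_matrix_mult_def distrib_right sum.distrib)

lemma matrix_sum_ldistrib: "(M::real^_^_) ** (\<Sum>i\<in>I. F i) = (\<Sum>i\<in>I. M ** F i)"
  by (simp add: vec_eq_iff matrix_matrix_mult_def sum_component sum_distrib_left sum.swap[where A=I])

lemma matrix_sum_rdistrib: "(\<Sum>i\<in>I. F i) ** (M::real^_^_) = (\<Sum>i\<in>I. F i ** M)"
  by (simp add: vec_eq_iff matrix_matrix_mult_def sum_component sum_distrib_right sum.swap[where A=I])

lemma transpose_sum: "transpose (\<Sum>i\<in>I. F i) = (\<Sum>i\<in>I. transpose (F i :: real^'c^'r))"
  by (simp add: vec_eq_iff transpose_def sum_component)

lemma inner_matrix_vector_mult: "(a::real^'r) \<bullet> ((D::real^'c^'r) *v b) = (transpose D *v a) \<bullet> b"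
  by (simp add: dot_lmul_matrix[symmetric])

lemma norm_transpose: "norm (transpose (D::real^'c^'r)) = norm D"
proof -
  have "transpose D \<bullet> transpose D = (\<Sum>i\<in>UNIV. \<Sum>j\<in>UNIV. D$j$i * D$j$i)"
    by (simp add: inner_vec_def transpose_def)
  also have "\<dots> = D \<bullet> D"
    by (subst sum.swap) (simp add: inner_vec_def)
  finally show ?thesis
    by (simp add: norm_eq_sqrt_inner)
qed

lemma power2_norm_matrix: "(norm (M::real^'c^'r))\<^sup>2 = (\<Sum>r\<in>UNIV. (norm (M$r))\<^sup>2)"
  by (simp add: power2_norm_eq_inner inner_vec_def)

lemma power2_norm_matrix_vector_mult: "(norm ((M::real^'c^'r) *v v))\<^sup>2 = (\<Sum>r\<in>UNIV. (M$r \<bullet> v)\<^sup>2)"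
  unfolding power2_norm_eq_inner inner_vec_def matrix_vector_mul_component
  by (simp add: power2_eq_square)

lemma norm_orthogonal_matrix_vector_mult:
  assumes "orthogonal_matrix (Q::real^'n^'n)"
  shows "norm (Q *v v) = norm v"
proof -
  have "(Q *v v) \<bullet> (Q *v v) = v \<bullet> v"
    using assms by (simp add: inner_matrix_vector_mult matrix_vector_mul_assoc orthogonal_matrix)
  then show ?thesis
    by (simp add: norm_eq_sqrt_inner)
qed

lemma sum_UNIV_Plus:
  "(\<Sum>k\<in>UNIV. h k) = (\<Sum>a\<in>UNIV. h (Inl a)) + (\<Sum>b\<in>UNIV. h (Inr b :: 'a::finite + 'b::finite))"
  using sum.Plus[of "UNIV :: 'a set" "UNIV :: 'b set" h] by (simp add: comp_def)

lemma orthogonal_matrix_Jmat: "orthogonal_matrix (Jmat :: real^('m::finite + 'm)^('m + 'm))"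
  unfolding orthogonal_matrix vec_eq_iff
proof (intro allI)
  fix i j :: "'m + 'm"
  show "(transpose Jmat ** Jmat) $ i $ j = (mat 1 :: real^('m + 'm)^('m + 'm)) $ i $ j"
    by (cases i; cases j) (simp_all add: matrix_matrix_mult_def transpose_def Jmat_def mat_def
        sum_UNIV_Plus if_distrib if_distribR cong: if_cong)
qed

lemma orthogonal_matrix_if_complete:
  fixes U :: "real^'n^'n"
  assumes "\<forall>y. norm ((mat 1 - U ** transpose U) *v y) = 0"
  shows "orthogonal_matrix U"
proof -
  have "U ** transpose U = mat 1"
    using assms by (simp add: matrix_eq matrix_vector_mult_diff_rdistrib)
  then show ?thesis
    by (simp add: orthogonal_matrix_def matrix_left_right_inverse)
qed

lemma kron_apply_vecm:
  "(kron P Q *v vecm (X::real^'n^'m)) $ (a, b) = (\<Sum>c\<in>UNIV. \<Sum>d\<in>UNIV. P$a$c * Q$b$d * X$d$c)"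
proof -
  have "(kron P Q *v vecm X) $ (a, b)
      = (\<Sum>c\<in>UNIV. \<Sum>d\<in>UNIV. kron P Q $ (a, b) $ (c, d) * vecm X $ (c, d))"
    by (simp add: matrix_vector_mult_def sum.cartesian_product UNIV_Times_UNIV case_prod_unfold)
  then show ?thesis
    by (simp add: kron_def vecm_def)
qed

lemma kron_lyapunov_vecm:
  "(kron (mat 1) G + kron G (mat 1)) *v vecm (X::real^'n^'n) = vecm (G ** X + X ** transpose G)"
  unfolding vec_eq_iff
proof
  fix p :: "'n \<times> 'n"
  obtain a b where p: "p = (a, b)" by force
  show "((kron (mat 1) G + kron G (mat 1)) *v vecm X) $ p = vecm (G ** X + X ** transpose G) $ p"
    unfolding p matrix_vector_mult_add_rdistrib vector_add_component kron_apply_vecm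
    by (subst sum.swap) (simp add: mat_def if_distrib if_distribR sum.delta vecm_def matrix_matrix_mult_def
        transpose_def mult.commute cong: if_cong)
qed

lemma vecm_eq_iff: "vecm X = vecm Y \<longleftrightarrow> X = Y"
  by (auto simp: vec_eq_iff vecm_def)

lemma transpose_opinf_gram: "transpose (opinf_gram U x I) = opinf_gram U x I"
  by (simp add: opinf_gram_def transpose_sum transpose_outer)

section \<open>Gram matrices and the Lyapunov equation\<close>

definition gram_bounded_below :: "real \<Rightarrow> ('i \<Rightarrow> real^'n) \<Rightarrow> 'i set \<Rightarrow> bool" where
  "gram_bounded_below c v I \<longleftrightarrow> (\<forall>w. c * (norm w)\<^sup>2 \<le> (\<Sum>i\<in>I. (w \<bullet> v i)\<^sup>2))"

lemma gram_bounded_below_matrix: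
  assumes "gram_bounded_below c v I"
  shows "c * (norm (M::real^'n^'r))\<^sup>2 \<le> (\<Sum>i\<in>I. (norm (M *v v i))\<^sup>2)"
proof -
  have "c * (norm M)\<^sup>2 = (\<Sum>r\<in>UNIV. c * (norm (M$r))\<^sup>2)"
    by (simp add: power2_norm_matrix sum_distrib_left)
  also have "\<dots> \<le> (\<Sum>r\<in>UNIV. \<Sum>i\<in>I. (M$r \<bullet> v i)\<^sup>2)"
    using assms by (intro sum_mono) (simp add: gram_bounded_below_def)
  also have "\<dots> = (\<Sum>i\<in>I. (norm (M *v v i))\<^sup>2)"
    by (simp add: power2_norm_matrix_vector_mult sum.swap[where B=I])
  finally show ?thesis .
qed

lemma gram_bounded_below_orthogonal_transform:
  assumes "orthogonal_matrix U" and "gram_bounded_below c v I"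
  shows "gram_bounded_below c (\<lambda>i. transpose U *v v i) I"
  unfolding gram_bounded_below_def
proof
  fix w
  have "c * (norm (U *v w))\<^sup>2 \<le> (\<Sum>i\<in>I. ((U *v w) \<bullet> v i)\<^sup>2)"
    using assms(2) by (simp add: gram_bounded_below_def)
  then show "c * (norm w)\<^sup>2 \<le> (\<Sum>i\<in>I. (w \<bullet> (transpose U *v v i))\<^sup>2)"
    by (simp only: norm_orthogonal_matrix_vector_mult[OF assms(1)] inner_matrix_vector_mult
        transpose_transpose)
qed

lemma inner_lyapunov_gram:
  fixes D :: "real^'n^'n" and h :: "'i \<Rightarrow> real^'n" and I :: "'i set"
  defines "G \<equiv> \<Sum>i\<in>I. outer (h i) (h i)"
  shows "D \<bullet> (G ** D + D ** G) = (\<Sum>i\<in>I. (norm (transpose D *v h i))\<^sup>2 + (norm (D *v h i))\<^sup>2)"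
  by (simp add: G_def matrix_sum_ldistrib matrix_sum_rdistrib outer_matrix_mult matrix_mult_outer
      inner_add_right inner_sum_right inner_outer inner_matrix_vector_mult sum.distrib power2_norm_eq_inner)

text \<open>Pairing both sides with \<open>D\<close>: the left side is at least \<open>2c|D|\<^sup>2\<close>, the right
  side at most \<open>|D| |E|\<close>.\<close>

lemma lyapunov_gram_norm_le:
  fixes D :: "real^'n^'n" and h :: "'i \<Rightarrow> real^'n" and I :: "'i set"
  defines "G \<equiv> \<Sum>i\<in>I. outer (h i) (h i)"
  assumes "gram_bounded_below c h I" and "G ** D + D ** G = E"
  shows "2 * c * norm D \<le> norm E"
proof -
  have "2 * c * (norm D)\<^sup>2 \<le> (\<Sum>i\<in>I. (norm (transpose D *v h i))\<^sup>2 + (norm (D *v h i))\<^sup>2)"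
    using gram_bounded_below_matrix[OF assms(2), of D] gram_bounded_below_matrix[OF assms(2), of "transpose D"]
    by (simp add: norm_transpose sum.distrib)
  also have "\<dots> = D \<bullet> E"
    unfolding assms(3)[symmetric] G_def by (rule inner_lyapunov_gram[symmetric])
  also have "\<dots> \<le> norm D * norm E"
    by (rule norm_cauchy_schwarz)
  finally have "2 * c * (norm D)\<^sup>2 \<le> norm D * norm E" .
  then show ?thesis
    by (cases "D = 0") (simp_all add: power2_eq_square)
qed

text \<open>For exact derivatives \<open>Abar\<close> would solve the operator inference equation; the
  residual consists of the projected derivative errors \<open>e\<close>.\<close>

lemma opinf_rhs_residual:
  fixes U J A :: "real^'n^'n" and x xt g :: "nat \<Rightarrow> real^'n"
  assumes U: "U ** transpose U = mat 1" and A: "transpose A = A"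
  defines "Ab \<equiv> transpose U ** A ** U"
    and "h \<equiv> \<lambda>i. transpose U *v x i"
    and "e \<equiv> \<lambda>i. transpose U *v (transpose J *v xt i - (A *v x i + g i))"
  shows "opinf_rhs U J x xt g I = Ab ** opinf_gram U x I + opinf_gram U x I ** Ab
           + (\<Sum>i\<in>I. outer (e i) (h i) + outer (h i) (e i))"
proof -
  define Jh where "Jh = transpose U ** J ** U"
  define r where "r = (\<lambda>i. transpose Jh *v (transpose U *v xt i) - transpose U *v g i)"
  have UUt: "U *v (transpose U *v v) = v" for v
    by (simp only: matrix_vector_mul_assoc U matrix_vector_mul_lid)
  have r: "r i = Ab *v h i + e i" for i
  proof -
    have "transpose Jh *v (transpose U *v xt i) = transpose U *v (transpose J *v xt i)"
      by (simp only: Jh_def matrix_transpose_mul transpose_transpose matrix_vector_mul_assoc[symmetric] UUt)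
    moreover have "Ab *v h i = transpose U *v (A *v x i)"
      by (simp only: Ab_def h_def matrix_vector_mul_assoc[symmetric] UUt)
    ultimately show ?thesis
      by (simp add: r_def e_def matrix_vector_mult_diff_distrib matrix_vector_right_distrib)
  qed
  have Ab_sym: "transpose Ab = Ab"
    by (simp only: Ab_def matrix_transpose_mul A matrix_mul_assoc transpose_transpose)
  have "opinf_rhs U J x xt g I = (\<Sum>i\<in>I. outer (r i) (h i) + outer (h i) (r i))"
    by (simp add: opinf_rhs_def Let_def Jh_def[symmetric] h_def r_def matrix_sum_ldistrib
        matrix_sum_rdistrib matrix_mult_outer outer_matrix_mult outer_diff_left outer_diff_right
        sum_subtractf sum.distrib)
  also have "\<dots> = (\<Sum>i\<in>I. outer (Ab *v h i) (h i)) + (\<Sum>i\<in>I. outer (h i) (Ab *v h i))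
      + (\<Sum>i\<in>I. outer (e i) (h i) + outer (h i) (e i))"
    by (simp add: r outer_add_left outer_add_right sum.distrib)
  also have "(\<Sum>i\<in>I. outer (Ab *v h i) (h i)) = Ab ** opinf_gram U x I"
    by (simp add: opinf_gram_def h_def matrix_sum_ldistrib matrix_mult_outer)
  also have "(\<Sum>i\<in>I. outer (h i) (Ab *v h i)) = opinf_gram U x I ** Ab"
    by (simp only: opinf_gram_def h_def matrix_sum_rdistrib outer_matrix_mult Ab_sym)
  finally show ?thesis .
qed

lemma opinf_operator_error_le:
  fixes U J A Ah :: "real^'n^'n" and x xt g :: "nat \<Rightarrow> real^'n"
  assumes U: "orthogonal_matrix U" and J: "orthogonal_matrix J" and A: "transpose A = A"
    and gram: "gram_bounded_below c x I"
    and sol: "opinf_gram U x I ** Ah + Ah ** opinf_gram U x I = opinf_rhs U J x xt g I"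
  shows "c * norm (Ah - transpose U ** A ** U)
           \<le> (\<Sum>i\<in>I. norm (xt i - J *v (A *v x i + g i)) * norm (x i))"
proof -
  define Ab where "Ab = transpose U ** A ** U"
  define D where "D = Ah - Ab"
  define G where "G = opinf_gram U x I"
  define h where "h = (\<lambda>i. transpose U *v x i)"
  define e where "e = (\<lambda>i. transpose U *v (transpose J *v xt i - (A *v x i + g i)))"
  define E where "E = (\<Sum>i\<in>I. outer (e i) (h i) + outer (h i) (e i))"
  have UUt: "U ** transpose U = mat 1"
    using U by (simp add: orthogonal_matrix_def)
  have "opinf_rhs U J x xt g I = Ab ** G + G ** Ab + E"
    unfolding Ab_def G_def E_def e_def h_def by (rule opinf_rhs_residual[OF UUt A])
  then have "G ** (D + Ab) + (D + Ab) ** G = Ab ** G + G ** Ab + E"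
    using sol by (simp add: D_def G_def)
  then have "G ** D + D ** G = E"
    by (simp add: matrix_add_ldistrib matrix_add_rdistrib)
  moreover have "G = (\<Sum>i\<in>I. outer (h i) (h i))"
    by (simp add: G_def opinf_gram_def h_def)
  moreover have "gram_bounded_below c h I"
    unfolding h_def using U gram by (rule gram_bounded_below_orthogonal_transform)
  ultimately have "2 * c * norm D \<le> norm E"
    using lyapunov_gram_norm_le by blast
  also have "norm E \<le> (\<Sum>i\<in>I. 2 * (norm (e i) * norm (h i)))"
    unfolding E_def
    by (rule order_trans[OF norm_sum], rule sum_mono, rule order_trans[OF norm_triangle_ineq])
      (simp add: norm_outer)
  also have "\<dots> = 2 * (\<Sum>i\<in>I. norm (xt i - J *v (A *v x i + g i)) * norm (x i))"
  proof -
    have "norm (e i) = norm (xt i - J *v (A *v x i + g i))" for i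
    proof -
      have "transpose J *v xt i - (A *v x i + g i) = transpose J *v (xt i - J *v (A *v x i + g i))"
        using J by (simp add: matrix_vector_mult_diff_distrib matrix_vector_mul_assoc orthogonal_matrix)
      then show ?thesis
        using U J by (simp add: e_def norm_orthogonal_matrix_vector_mult del: transpose_matrix_vector)
    qed
    moreover have "norm (h i) = norm (x i)" for i
      using U by (simp add: h_def norm_orthogonal_matrix_vector_mult del: transpose_matrix_vector)
    ultimately show ?thesis
      by (simp add: sum_distrib_left)
  qed
  finally show ?thesis
    by (simp add: D_def Ab_def)
qed

lemma gram_bounded_below_spanning:
  fixes v :: "'i \<Rightarrow> real^'n"
  assumes "finite S" and "span (v ` S) = UNIV"
  obtains c where "c > 0" and "gram_bounded_below c v S"
proof -
  define f where "f = (\<lambda>w::real^'n. \<Sum>s\<in>S. (w \<bullet> v s)\<^sup>2)"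
  have "\<exists>w0\<in>sphere 0 1. \<forall>w\<in>sphere 0 1. f w0 \<le> f w"
    by (rule continuous_attains_inf) (auto simp: f_def intro!: continuous_intros)
  then obtain w0 where w0: "norm w0 = 1" and min: "\<And>w. norm w = 1 \<Longrightarrow> f w0 \<le> f w"
    by auto
  have "f w0 \<noteq> 0"
  proof
    assume "f w0 = 0"
    then have "\<forall>s\<in>S. (w0 \<bullet> v s)\<^sup>2 = 0"
      using assms(1) by (simp add: f_def sum_nonneg_eq_0_iff)
    then have "orthogonal w0 u" if "u \<in> v ` S" for u
      using that by (auto simp: orthogonal_def)
    then have "orthogonal w0 w0"
      using orthogonal_to_span[of w0 "v ` S" w0] assms(2) by blast
    with w0 show False
      by (simp add: orthogonal_def)
  qed
  moreover have "f w0 \<ge> 0"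
    by (simp add: f_def sum_nonneg)
  moreover have "f w0 * (norm w)\<^sup>2 \<le> f w" for w
  proof (cases "w = 0")
    case False
    have "f w0 \<le> f (w /\<^sub>R norm w)"
      using False by (intro min) simp
    also have "\<dots> = f w / (norm w)\<^sup>2"
      by (simp add: f_def sum_distrib_left power_mult_distrib power_inverse divide_inverse mult.commute)
    finally show ?thesis
      using False by (simp add: le_divide_eq)
  qed (simp add: f_def)
  ultimately show thesis
    using that[of "f w0"] by (simp add: gram_bounded_below_def f_def)
qed

section \<open>Snapshot Gram matrices on fine grids\<close>

lemma card_snap_idx: "card (snap_idx T dt) = nat \<lfloor>T / dt\<rfloor> + 1"
  by (simp add: snap_idx_def)

lemma tgrid_in_interval:
  assumes "0 < dt" and "0 \<le> T" and "i \<in> snap_idx T dt"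
  shows "tgrid t0 dt i \<in> {t0..t0 + T}"
proof -
  have "real i \<le> T / dt"
    using assms by (simp add: snap_idx_def le_nat_iff le_floor_iff)
  then show ?thesis
    using assms(1) by (simp add: tgrid_def le_divide_eq)
qed

lemma tgrid_points_in_interval:
  assumes dt: "0 < dt" and a: "t0 \<le> a" "a + \<rho> \<le> t0 + T" and \<rho>: "0 \<le> \<rho>"
  obtains Is where "Is \<subseteq> snap_idx T dt" and "card Is = nat \<lfloor>\<rho> / dt\<rfloor>"
    and "\<And>i. i \<in> Is \<Longrightarrow> tgrid t0 dt i \<in> {a..a + \<rho>}"
proof -
  define lo where "lo = nat \<lceil>(a - t0) / dt\<rceil>"
  define L where "L = nat \<lfloor>\<rho> / dt\<rfloor>"
  have "0 \<le> (a - t0) / dt"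
    using a dt by simp
  then have "(a - t0) / dt \<le> real lo" and "real lo \<le> (a - t0) / dt + 1"
    by (simp_all add: lo_def of_nat_nat ceiling_correct)
  then have "a - t0 \<le> real lo * dt" and "real lo * dt \<le> ((a - t0) / dt + 1) * dt"
    using dt by (simp_all add: divide_le_eq mult_right_mono)
  then have lo: "a - t0 \<le> real lo * dt" "real lo * dt \<le> a - t0 + dt"
    using dt by (simp_all add: distrib_right)
  have "real L \<le> \<rho> / dt"
    using \<rho> dt by (simp add: L_def)
  then have L: "real L * dt \<le> \<rho>"
    using dt by (simp add: le_divide_eq)
  have grid: "tgrid t0 dt i \<in> {a..a + \<rho>}" if "i \<in> {lo..<lo + L}" for i
  proof -
    have "real lo \<le> real i" "real i + 1 \<le> real lo + real L"
      using that by auto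
    then have "real lo * dt \<le> real i * dt" "(real i + 1) * dt \<le> (real lo + real L) * dt"
      using dt by (simp_all add: mult_right_mono)
    then show ?thesis
      using lo L by (simp add: tgrid_def algebra_simps)
  qed
  have "{lo..<lo + L} \<subseteq> snap_idx T dt"
  proof
    fix i assume "i \<in> {lo..<lo + L}"
    then have "real i * dt \<le> T"
      using grid a by (force simp: tgrid_def)
    then have "int i \<le> \<lfloor>T / dt\<rfloor>"
      using dt by (simp add: le_floor_iff le_divide_eq)
    then show "i \<in> snap_idx T dt"
      by (simp add: snap_idx_def)
  qed
  then show thesis
    using that[of "{lo..<lo + L}"] grid by (simp add: L_def)
qed

lemma power2_inner_perturb_ge:
  fixes w :: "'a::real_inner"
  assumes "norm (y - z) \<le> e"
  shows "(w \<bullet> z)\<^sup>2 / 2 - (norm w)\<^sup>2 * e\<^sup>2 \<le> (w \<bullet> y)\<^sup>2"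
proof -
  have "\<bar>w \<bullet> (y - z)\<bar> \<le> norm w * e"
    using Cauchy_Schwarz_ineq2[of w "y - z"] assms by (meson mult_left_mono norm_ge_zero order_trans)
  then have "(w \<bullet> (y - z))\<^sup>2 \<le> (norm w)\<^sup>2 * e\<^sup>2"
    by (metis abs_ge_zero power2_abs power_mono power_mult_distrib)
  moreover have "(w \<bullet> z)\<^sup>2 \<le> 2 * (w \<bullet> y)\<^sup>2 + 2 * (w \<bullet> (y - z))\<^sup>2"
    using zero_le_power2[of "2 * (w \<bullet> y) - w \<bullet> z"]
    by (simp add: inner_diff_right power2_eq_square algebra_simps)
  ultimately show ?thesis
    by simp
qed

lemma snapshot_sum_ge_window:
  fixes x :: "real \<Rightarrow> real^'n"
  assumes dt: "0 < dt" and \<rho>: "0 \<le> \<rho>" "2 * \<rho> \<le> T" and s: "s \<in> {t0..t0 + T}"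
    and near: "\<And>t. t \<in> {t0..t0 + T} \<Longrightarrow> \<bar>t - s\<bar> \<le> \<rho> \<Longrightarrow> norm (x t - x s) \<le> \<eta>"
  shows "real (nat \<lfloor>\<rho> / dt\<rfloor>) * ((w \<bullet> x s)\<^sup>2 / 2 - (norm w)\<^sup>2 * \<eta>\<^sup>2)
           \<le> (\<Sum>i\<in>snap_idx T dt. (w \<bullet> x (tgrid t0 dt i))\<^sup>2)"
proof -
  obtain a where a: "t0 \<le> a" "a + \<rho> \<le> t0 + T" "s - \<rho> \<le> a" "a \<le> s"
  proof (cases "s + \<rho> \<le> t0 + T")
    case True
    then show thesis
      using s \<rho> by (intro that[of s]) auto
  next
    case False
    then show thesis
      using s \<rho> by (intro that[of "s - \<rho>"]) auto
  qed
  obtain Is where Is: "Is \<subseteq> snap_idx T dt" "card Is = nat \<lfloor>\<rho> / dt\<rfloor>"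
    and grid: "\<And>i. i \<in> Is \<Longrightarrow> tgrid t0 dt i \<in> {a..a + \<rho>}"
    using tgrid_points_in_interval[OF dt a(1,2) \<rho>(1)] by blast
  have "(w \<bullet> x s)\<^sup>2 / 2 - (norm w)\<^sup>2 * \<eta>\<^sup>2 \<le> (w \<bullet> x (tgrid t0 dt i))\<^sup>2" if "i \<in> Is" for i
  proof (rule power2_inner_perturb_ge, rule near)
    show "tgrid t0 dt i \<in> {t0..t0 + T}" and "\<bar>tgrid t0 dt i - s\<bar> \<le> \<rho>"
      using grid[OF that] a by auto
  qed
  then have "(\<Sum>i\<in>Is. (w \<bullet> x s)\<^sup>2 / 2 - (norm w)\<^sup>2 * \<eta>\<^sup>2)
      \<le> (\<Sum>i\<in>Is. (w \<bullet> x (tgrid t0 dt i))\<^sup>2)"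
    by (rule sum_mono)
  also have "\<dots> \<le> (\<Sum>i\<in>snap_idx T dt. (w \<bullet> x (tgrid t0 dt i))\<^sup>2)"
    using Is(1) by (intro sum_mono2) (auto simp: snap_idx_def)
  finally show ?thesis
    by (simp add: Is(2))
qed

lemma card_snap_idx_le_window:
  assumes dt: "0 < dt" "dt \<le> \<rho> / 2" and \<rho>: "\<rho> \<le> T"
  shows "\<rho> * real (card (snap_idx T dt)) \<le> 4 * T * real (nat \<lfloor>\<rho> / dt\<rfloor>)"
proof -
  have "2 \<le> \<rho> / dt" "2 \<le> T / dt"
    using dt \<rho> by (simp_all add: le_divide_eq)
  then have "real (card (snap_idx T dt)) \<le> 2 * (T / dt)" and "\<rho> / dt \<le> 2 * real (nat \<lfloor>\<rho> / dt\<rfloor>)"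
    by (simp_all add: card_snap_idx) linarith+
  moreover have "0 \<le> \<rho>" "0 \<le> T"
    using dt \<rho> by simp_all
  ultimately have "\<rho> * real (card (snap_idx T dt)) \<le> \<rho> * (2 * (T / dt))"
    and "T * (\<rho> / dt) \<le> T * (2 * real (nat \<lfloor>\<rho> / dt\<rfloor>))"
    by (simp_all only: mult_left_mono)
  moreover have "\<rho> * (2 * (T / dt)) = 2 * (T * (\<rho> / dt))"
    by simp
  ultimately show ?thesis
    by linarith
qed

lemma snapshot_sum_ge_gram:
  fixes x :: "real \<Rightarrow> real^'n"
  assumes dt: "0 < dt" and \<rho>: "0 \<le> \<rho>" "2 * \<rho> \<le> T"
    and S: "finite S" "S \<subseteq> {t0..t0 + T}" and gram: "gram_bounded_below c x S"
    and near: "\<And>s t. s \<in> S \<Longrightarrow> t \<in> {t0..t0 + T} \<Longrightarrow> \<bar>t - s\<bar> \<le> \<rho> \<Longrightarrow> norm (x t - x s) \<le> \<eta>"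
    and \<eta>: "4 * real (card S) * \<eta>\<^sup>2 \<le> c"
  shows "real (nat \<lfloor>\<rho> / dt\<rfloor>) * c * (norm w)\<^sup>2
           \<le> 4 * real (card S) * (\<Sum>i\<in>snap_idx T dt. (w \<bullet> x (tgrid t0 dt i))\<^sup>2)"
proof -
  define L where "L = real (nat \<lfloor>\<rho> / dt\<rfloor>)"
  define P where "P = (\<Sum>i\<in>snap_idx T dt. (w \<bullet> x (tgrid t0 dt i))\<^sup>2)"
  define K where "K = real (card S)"
  have "(\<Sum>s\<in>S. L * ((w \<bullet> x s)\<^sup>2 / 2 - (norm w)\<^sup>2 * \<eta>\<^sup>2)) \<le> (\<Sum>s\<in>S. P)"
  proof (rule sum_mono)
    fix s assume s: "s \<in> S"
    then show "L * ((w \<bullet> x s)\<^sup>2 / 2 - (norm w)\<^sup>2 * \<eta>\<^sup>2) \<le> P"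
      unfolding L_def P_def using S(2) near[OF s] by (intro snapshot_sum_ge_window[OF dt \<rho>]) auto
  qed
  then have "L * ((\<Sum>s\<in>S. (w \<bullet> x s)\<^sup>2) / 2 - K * ((norm w)\<^sup>2 * \<eta>\<^sup>2)) \<le> K * P"
    by (simp only: sum_distrib_left[symmetric] sum_subtractf sum_divide_distrib[symmetric]
        sum_constant K_def) (simp add: mult_ac)
  moreover have "c * (norm w)\<^sup>2 \<le> (\<Sum>s\<in>S. (w \<bullet> x s)\<^sup>2)"
    using gram by (simp add: gram_bounded_below_def)
  moreover have "4 * (K * ((norm w)\<^sup>2 * \<eta>\<^sup>2)) \<le> c * (norm w)\<^sup>2"
    using mult_right_mono[OF \<eta>, of "(norm w)\<^sup>2"] by (simp add: K_def mult_ac)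
  ultimately have "c * (norm w)\<^sup>2 / 4 \<le> (\<Sum>s\<in>S. (w \<bullet> x s)\<^sup>2) / 2 - K * ((norm w)\<^sup>2 * \<eta>\<^sup>2)"
    and "L * ((\<Sum>s\<in>S. (w \<bullet> x s)\<^sup>2) / 2 - K * ((norm w)\<^sup>2 * \<eta>\<^sup>2)) \<le> K * P"
    by linarith+
  then have "L * (c * (norm w)\<^sup>2 / 4) \<le> K * P"
    using mult_left_mono[of _ _ L] unfolding L_def by (meson of_nat_0_le_iff order_trans)
  then show ?thesis
    by (simp add: L_def P_def K_def)
qed

lemma snapshot_gram_bounded_below_window:
  fixes x :: "real \<Rightarrow> real^'n"
  assumes dt: "0 < dt" "dt \<le> \<rho> / 2" and \<rho>: "2 * \<rho> \<le> T"
    and S: "finite S" "S \<noteq> {}" "S \<subseteq> {t0..t0 + T}" and gram: "gram_bounded_below c x S"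
    and near: "\<And>s t. s \<in> S \<Longrightarrow> t \<in> {t0..t0 + T} \<Longrightarrow> \<bar>t - s\<bar> \<le> \<rho> \<Longrightarrow> norm (x t - x s) \<le> \<eta>"
    and \<eta>: "4 * real (card S) * \<eta>\<^sup>2 \<le> c" and c: "0 \<le> c"
  shows "gram_bounded_below (c * \<rho> / (16 * real (card S) * T) * real (card (snap_idx T dt)))
           (\<lambda>i. x (tgrid t0 dt i)) (snap_idx T dt)"
  unfolding gram_bounded_below_def
proof
  fix w
  define K where "K = real (card S)"
  define L where "L = real (nat \<lfloor>\<rho> / dt\<rfloor>)"
  define P where "P = (\<Sum>i\<in>snap_idx T dt. (w \<bullet> x (tgrid t0 dt i))\<^sup>2)"
  have K: "0 < K" and T: "0 < T"
    using S dt \<rho> by (simp_all add: K_def card_gt_0_iff)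
  have "c * (norm w)\<^sup>2 * (\<rho> * real (card (snap_idx T dt))) \<le> c * (norm w)\<^sup>2 * (4 * T * L)"
    unfolding L_def using dt \<rho> c by (intro mult_left_mono card_snap_idx_le_window) simp_all
  also have "\<dots> = 4 * T * (L * c * (norm w)\<^sup>2)"
    by (simp add: mult_ac)
  also have "\<dots> \<le> 4 * T * (4 * K * P)"
    unfolding L_def K_def P_def using dt \<rho> T
    by (intro mult_left_mono snapshot_sum_ge_gram[OF dt(1) _ _ S(1,3) gram near \<eta>]) simp_all
  finally show "c * \<rho> / (16 * real (card S) * T) * real (card (snap_idx T dt)) * (norm w)\<^sup>2 \<le> P"
    using K T by (simp add: K_def field_simps)
qed

text \<open>By uniform continuity each of the finitely many spanning snapshots \<open>x s\<close> is
  well approximated at the \<open>\<lfloor>\<rho>/dt\<rfloor>\<close> grid points within distance \<open>\<rho>\<close> of \<open>s\<close>, a fixed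
  fraction of all grid points.\<close>

lemma snapshot_gram_bounded_below:
  fixes x :: "real \<Rightarrow> real^'n"
  assumes T: "0 < T" and cont: "continuous_on {t0..t0 + T} x"
    and S: "finite S" "S \<subseteq> {t0..t0 + T}" and span: "span (x ` S) = UNIV"
  obtains c \<delta> where "0 < c" and "0 < \<delta>"
    and "\<And>dt. 0 < dt \<Longrightarrow> dt < \<delta> \<Longrightarrow>
           gram_bounded_below (c * real (card (snap_idx T dt))) (\<lambda>i. x (tgrid t0 dt i)) (snap_idx T dt)"
proof -
  obtain c0 where c0: "0 < c0" and gram: "gram_bounded_below c0 x S"
    using gram_bounded_below_spanning[OF S(1) span] by blast
  define K where "K = real (card S)"
  have "S \<noteq> {}"
    using span by auto
  then have K: "0 < K"
    using S(1) by (simp add: K_def card_gt_0_iff)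
  define \<eta> where "\<eta> = sqrt (c0 / (4 * K))"
  have \<eta>: "0 < \<eta>" "4 * K * \<eta>\<^sup>2 \<le> c0"
    using c0 K by (simp_all add: \<eta>_def)
  obtain r where r: "0 < r"
    and uc: "\<And>t s. t \<in> {t0..t0 + T} \<Longrightarrow> s \<in> {t0..t0 + T} \<Longrightarrow> dist t s < r \<Longrightarrow> dist (x t) (x s) < \<eta>"
    using compact_uniformly_continuous[OF cont compact_Icc] \<eta>(1)
    unfolding uniformly_continuous_on_def by metis
  define \<rho> where "\<rho> = min r T / 2"
  have \<rho>: "0 < \<rho>" "\<rho> < r" "2 * \<rho> \<le> T"
    using r T by (auto simp: \<rho>_def)
  have near: "norm (x t - x s) \<le> \<eta>" if "s \<in> S" "t \<in> {t0..t0 + T}" "\<bar>t - s\<bar> \<le> \<rho>" for s t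
    using uc[of t s] that S(2) \<rho>(2) by (force simp: dist_norm)
  show thesis
  proof (rule that)
    show "0 < c0 * \<rho> / (16 * K * T)" and "0 < \<rho> / 2"
      using c0 \<rho> K T by simp_all
    show "gram_bounded_below (c0 * \<rho> / (16 * K * T) * real (card (snap_idx T dt)))
        (\<lambda>i. x (tgrid t0 dt i)) (snap_idx T dt)" if "0 < dt" "dt < \<rho> / 2" for dt
      unfolding K_def using that \<rho> \<eta> c0 \<open>S \<noteq> {}\<close>
      by (intro snapshot_gram_bounded_below_window[OF _ _ _ S(1) _ S(2) gram near]) (simp_all add: K_def)
  qed
qed

lemma snapshot_gram_bounded_below_full_rank:
  fixes x :: "real \<Rightarrow> real^'n"
  assumes T: "0 < T" and cont: "continuous_on {t0..t0 + T} x"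
    and rank: "dim (span ((\<lambda>i. x (tgrid t0 (T / CARD('n)) i)) ` snap_idx T (T / CARD('n))))
               = min CARD('n) (card (snap_idx T (T / CARD('n))))"
  obtains c \<delta> where "0 < c" and "0 < \<delta>"
    and "\<And>dt. 0 < dt \<Longrightarrow> dt < \<delta> \<Longrightarrow>
           gram_bounded_below (c * real (card (snap_idx T dt))) (\<lambda>i. x (tgrid t0 dt i)) (snap_idx T dt)"
proof -
  define dt1 where "dt1 = T / CARD('n)"
  have "T / dt1 = real CARD('n)"
    using T by (simp add: dt1_def)
  then have "card (snap_idx T dt1) = CARD('n) + 1"
    by (simp only: card_snap_idx floor_of_nat nat_int)
  then have "span (x ` tgrid t0 dt1 ` snap_idx T dt1) = UNIV"
    using rank by (simp add: dt1_def dim_eq_full[symmetric] image_image)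
  moreover have "tgrid t0 dt1 ` snap_idx T dt1 \<subseteq> {t0..t0 + T}"
    using T by (auto simp: dt1_def intro!: tgrid_in_interval)
  ultimately show thesis
    using snapshot_gram_bounded_below[OF T cont] that by (metis finite_imageI finite_atMost snap_idx_def)
qed

section \<open>Convergence of the inferred operator\<close>

lemma opinf_operator_error_bound:
  fixes U J A Ah :: "real^'n^'n" and x xt g :: "nat \<Rightarrow> real^'n"
  assumes U: "orthogonal_matrix U" and J: "orthogonal_matrix J" and A: "transpose A = A"
    and I: "finite I" "I \<noteq> {}" and c: "0 < c"
    and gram: "gram_bounded_below (c * real (card I)) x I"
    and sol: "(kron (mat 1) (opinf_gram U x I) + kron (opinf_gram U x I) (mat 1)) *v vecm Ah
              = vecm (opinf_rhs U J x xt g I)"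
    and err: "\<And>i. i \<in> I \<Longrightarrow> norm (xt i - J *v (A *v x i + g i)) \<le> \<epsilon>"
    and bound: "\<And>i. i \<in> I \<Longrightarrow> norm (x i) \<le> B"
  shows "norm (Ah - transpose U ** A ** U) \<le> \<epsilon> * (B / c)"
proof -
  have "opinf_gram U x I ** Ah + Ah ** opinf_gram U x I = opinf_rhs U J x xt g I"
    using sol by (simp add: kron_lyapunov_vecm transpose_opinf_gram vecm_eq_iff)
  then have "c * real (card I) * norm (Ah - transpose U ** A ** U)
      \<le> (\<Sum>i\<in>I. norm (xt i - J *v (A *v x i + g i)) * norm (x i))"
    by (rule opinf_operator_error_le[OF U J A gram])
  also have "\<dots> \<le> real (card I) * (\<epsilon> * B)"
    using err bound by (intro sum_bounded_above mult_mono) (auto intro: order_trans[OF norm_ge_zero])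
  finally have "c * norm (Ah - transpose U ** A ** U) \<le> \<epsilon> * B"
    using I by (simp add: mult.assoc mult.left_commute[of c] mult_le_cancel_left_pos card_gt_0_iff)
  then show ?thesis
    using c by (simp add: field_simps)
qed

theorem theorem3:
  fixes A :: "real^('M::finite + 'M)^('M + 'M)"
    and f :: "real^('M + 'M) \<Rightarrow> real"
    and gradf :: "real^('M + 'M) \<Rightarrow> real^('M + 'M)"
    and x :: "real \<Rightarrow> real^('M + 'M)"
    and t0 T :: real
    and xt :: "real \<Rightarrow> nat \<Rightarrow> real^('M + 'M)"
    and Ubar :: "real \<Rightarrow> real^'M^'M"
    and Ahat :: "real \<Rightarrow> real^('M + 'M)^('M + 'M)"
  assumes A_sym: "transpose A = A"
    and f_grad: "\<forall>y. (f has_derivative (\<lambda>h. gradf y \<bullet> h)) (at y)"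
    and ode: "\<forall>t. (x has_vector_derivative (Jmat *v (A *v x t + gradf (x t)))) (at t)"
    and T_pos: "T > 0"
    and pod: "\<forall>dt>0. cotangent_lift_full (Ubar dt)
                 (snapYYt (\<lambda>i. x (tgrid t0 dt i)) (snap_idx T dt))"
    and basis_complete: "\<forall>dt>0. \<forall>y. norm ((mat 1 - blockdiag (Ubar dt) ** transpose (blockdiag (Ubar dt))) *v y) = 0"
    and deriv_approx: "((\<lambda>dt. Max ((\<lambda>i. norm (xt dt i - vector_derivative x (at (tgrid t0 dt i))))
                              ` snap_idx T dt)) \<longlongrightarrow> 0) (at_right 0)"
    and rank_X: "\<forall>dt>0. dim (span ((\<lambda>i. x (tgrid t0 dt i)) ` snap_idx T dt))
                   = min CARD('M + 'M) (card (snap_idx T dt))"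
    and rank_gradH: "\<forall>dt>0. dim (span ((\<lambda>i. A *v x (tgrid t0 dt i) + gradf (x (tgrid t0 dt i))) ` snap_idx T dt))
                   = min CARD('M + 'M) (card (snap_idx T dt))"
    and Ahat_sol: "\<forall>dt>0.
        (kron (mat 1) (opinf_gram (blockdiag (Ubar dt)) (\<lambda>i. x (tgrid t0 dt i)) (snap_idx T dt))
         + kron (opinf_gram (blockdiag (Ubar dt)) (\<lambda>i. x (tgrid t0 dt i)) (snap_idx T dt)) (mat 1))
        *v vecm (Ahat dt)
        = vecm (opinf_rhs (blockdiag (Ubar dt)) Jmat (\<lambda>i. x (tgrid t0 dt i)) (xt dt)
                 (\<lambda>i. gradf (x (tgrid t0 dt i))) (snap_idx T dt))"
  shows "((\<lambda>dt. Ahat dt - transpose (blockdiag (Ubar dt)) ** A ** blockdiag (Ubar dt)) \<longlongrightarrow> 0) (at_right 0)"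
proof -
  have cont: "continuous_on {t0..t0 + T} x"
    using ode by (meson continuous_at_imp_continuous_on has_vector_derivative_continuous)
  obtain B where B: "\<And>t. t \<in> {t0..t0 + T} \<Longrightarrow> norm (x t) \<le> B"
    using compact_imp_bounded[OF compact_continuous_image[OF cont compact_Icc]]
    unfolding bounded_iff by blast
  have dt1: "0 < T / CARD('M + 'M)"
    using T_pos by simp
  obtain c \<delta> where c: "0 < c" and \<delta>: "0 < \<delta>" and gram: "\<And>dt. 0 < dt \<Longrightarrow> dt < \<delta> \<Longrightarrow>
      gram_bounded_below (c * real (card (snap_idx T dt))) (\<lambda>i. x (tgrid t0 dt i)) (snap_idx T dt)"
    using snapshot_gram_bounded_below_full_rank[OF T_pos cont rank_X[rule_format, OF dt1]] by blast
  have x': "vector_derivative x (at t) = Jmat *v (A *v x t + gradf (x t))" for t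
    using ode vector_derivative_at by blast
  define err where "err dt = Max ((\<lambda>i. norm (xt dt i - vector_derivative x (at (tgrid t0 dt i))))
                              ` snap_idx T dt)" for dt
  have "norm (Ahat dt - transpose (blockdiag (Ubar dt)) ** A ** blockdiag (Ubar dt)) \<le> err dt * (B / c)"
    if dt: "0 < dt" "dt < \<delta>" for dt
  proof (rule opinf_operator_error_bound[OF _ orthogonal_matrix_Jmat A_sym _ _ c gram[OF dt]])
    show "orthogonal_matrix (blockdiag (Ubar dt))"
      using basis_complete dt(1) by (simp add: orthogonal_matrix_if_complete)
    show "norm (xt dt i - Jmat *v (A *v x (tgrid t0 dt i) + gradf (x (tgrid t0 dt i)))) \<le> err dt"
      if "i \<in> snap_idx T dt" for i
      unfolding err_def x'[symmetric] using that by (intro Max_ge) (auto simp: snap_idx_def)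
    show "norm (x (tgrid t0 dt i)) \<le> B" if "i \<in> snap_idx T dt" for i
      using B tgrid_in_interval[OF dt(1) _ that] T_pos by simp
  qed (use Ahat_sol dt in \<open>auto simp: snap_idx_def\<close>)
  then have "\<forall>\<^sub>F dt in at_right 0.
      norm (Ahat dt - transpose (blockdiag (Ubar dt)) ** A ** blockdiag (Ubar dt)) \<le> err dt * (B / c)"
    unfolding eventually_at_right_field using \<delta> by blast
  moreover have "((\<lambda>dt. err dt * (B / c)) \<longlongrightarrow> 0) (at_right 0)"
    using deriv_approx unfolding err_def by (rule tendsto_mult_left_zero)
  ultimately show ?thesis
    by (rule Lim_null_comparison)
qed

end
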